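(* Let $1\le p<\infty$ (so that $E=\mathcal{L}^p(I)$ is a Banach space) and suppose $\alpha_n(t)\in\{\Lambda,-\Lambda\}$ with $\Lambda\neq 0$, for all $n=1,\dots,N$ and all $t\in I$. If $(b_m)$ is a Schauder basis of $E$, then $(0*_Tb_m)$ is a Schauder sequence of $E$.
   Context: Let $N\ge 2$, $I=[x_0,x_N]$, $\Delta: x_0<\dots<x_N$ a partition, $L_n(x)=a_nx+b_n$ affine with $L_n(x_0)=x_{n-1}$, $L_n(x_N)=x_n$, $I_1=[x_0,x_1]$, $I_n=(x_{n-1},x_n]$ for $n\ge2$, and $\alpha=(\alpha_1,\dots,\alpha_N)\in(\mathcal{L}^\infty(I))^N$ with $\Lambda:=\operatorname{ess\,sup}\{|\alpha_n(x)|:x\in I,n=1,\dots,N\}<1$. For $f,b\in E$, $f*_Tb$ is the unique fixed point in $E$ of the contraction $Tg(x):=f(x)+\alpha_n(L_n^{-1}(x))(g-b)(L_n^{-1}(x))$, $x\in I_n$; $0$ is the null function. A sequence $(x_m)$ in a Banach space is a Schauder sequence if it is a Schauder basis of its closed linear span. *)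

theory Defs
  imports "HOL-Analysis.Analysis"
begin

definition Ival :: "(nat \<Rightarrow> real) \<Rightarrow> nat \<Rightarrow> real set" where
  "Ival x N = {x 0 .. x N}"

definition in_Lp :: "real \<Rightarrow> real set \<Rightarrow> (real \<Rightarrow> real) \<Rightarrow> bool" where
  "in_Lp p I f \<longleftrightarrow> f \<in> borel_measurable (lebesgue_on I)
      \<and> integrable (lebesgue_on I) (\<lambda>t. \<bar>f t\<bar> powr p)"

definition Lp_norm :: "real \<Rightarrow> real set \<Rightarrow> (real \<Rightarrow> real) \<Rightarrow> real" where
  "Lp_norm p I f = (\<integral>t. \<bar>f t\<bar> powr p \<partial>lebesgue_on I) powr (1 / p)"

definition Lp_tendsto :: "real \<Rightarrow> real set \<Rightarrow> (nat \<Rightarrow> real \<Rightarrow> real) \<Rightarrow> (real \<Rightarrow> real) \<Rightarrow> bool" where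
  "Lp_tendsto p I s f \<longleftrightarrow> (\<lambda>n. Lp_norm p I (\<lambda>t. s n t - f t)) \<longlonglongrightarrow> 0"

definition Lp_closed_span :: "real \<Rightarrow> real set \<Rightarrow> (nat \<Rightarrow> real \<Rightarrow> real) \<Rightarrow> (real \<Rightarrow> real) set" where
  "Lp_closed_span p I y = {f. in_Lp p I f \<and>
      (\<forall>e>0. \<exists>k c. Lp_norm p I (\<lambda>t. f t - (\<Sum>m<k. c m * y m t)) < e)}"

definition Lp_schauder_basis_of :: "real \<Rightarrow> real set \<Rightarrow> (real \<Rightarrow> real) set \<Rightarrow> (nat \<Rightarrow> real \<Rightarrow> real) \<Rightarrow> bool" where
  "Lp_schauder_basis_of p I S y \<longleftrightarrow> (\<forall>m. y m \<in> S) \<and>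
      (\<forall>f\<in>S. \<exists>!c::nat \<Rightarrow> real. Lp_tendsto p I (\<lambda>n t. \<Sum>m<n. c m * y m t) f)"

definition Lp_schauder_basis :: "real \<Rightarrow> real set \<Rightarrow> (nat \<Rightarrow> real \<Rightarrow> real) \<Rightarrow> bool" where
  "Lp_schauder_basis p I y \<longleftrightarrow> Lp_schauder_basis_of p I {f. in_Lp p I f} y"

definition Lp_schauder_sequence :: "real \<Rightarrow> real set \<Rightarrow> (nat \<Rightarrow> real \<Rightarrow> real) \<Rightarrow> bool" where
  "Lp_schauder_sequence p I y \<longleftrightarrow> Lp_schauder_basis_of p I (Lp_closed_span p I y) y"

text \<open>Inverse of the affine map L_n with L_n(x 0) = x (n-1), L_n(x N) = x n.\<close>
definition Linv :: "(nat \<Rightarrow> real) \<Rightarrow> nat \<Rightarrow> nat \<Rightarrow> real \<Rightarrow> real" where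
  "Linv x N n t = x 0 + (t - x (n - 1)) * (x N - x 0) / (x n - x (n - 1))"

text \<open>Index n of the piece I_n containing t (I_1 = [x 0, x 1], I_n = (x (n-1), x n]).\<close>
definition piece :: "(nat \<Rightarrow> real) \<Rightarrow> nat \<Rightarrow> real \<Rightarrow> nat" where
  "piece x N t = (LEAST n. 1 \<le> n \<and> t \<le> x n)"

definition fractal_T :: "(nat \<Rightarrow> real) \<Rightarrow> nat \<Rightarrow> (nat \<Rightarrow> real \<Rightarrow> real) \<Rightarrow>
    (real \<Rightarrow> real) \<Rightarrow> (real \<Rightarrow> real) \<Rightarrow> (real \<Rightarrow> real) \<Rightarrow> real \<Rightarrow> real" where
  "fractal_T x N \<alpha> f b g t =
     (if t \<in> Ival x N then
        (let n = piece x N t; s = Linv x N n t in f t + \<alpha> n s * (g s - b s))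
      else 0)"

text \<open>f *_T b: the (a.e. unique) fixed point in L^p(I) of T.\<close>
definition fractal_fn :: "real \<Rightarrow> (nat \<Rightarrow> real) \<Rightarrow> nat \<Rightarrow> (nat \<Rightarrow> real \<Rightarrow> real) \<Rightarrow>
    (real \<Rightarrow> real) \<Rightarrow> (real \<Rightarrow> real) \<Rightarrow> (real \<Rightarrow> real)" where
  "fractal_fn p x N \<alpha> f b = (SOME g. in_Lp p (Ival x N) g \<and>
      (AE t in lebesgue_on (Ival x N). fractal_T x N \<alpha> f b g t = g t))"

end

theory Submission
  imports Defs
begin

text \<open>
  Write \<open>\<phi>\<close> for the map that equals \<open>L\<^sub>n\<^sup>-\<^sup>1\<close> on \<open>I\<^sub>n\<close> and \<open>S g = \<alpha>\<^sub>n(\<phi> t) g(\<phi> t)\<close>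
  for \<open>t \<in> I\<^sub>n\<close>.  Since each \<open>L\<^sub>n\<^sup>-\<^sup>1\<close> maps \<open>I\<^sub>n\<close> affinely onto \<open>I\<close>, the map \<open>\<phi>\<close> preserves
  Lebesgue measure on \<open>I\<close>, and because \<open>|\<alpha>\<^sub>n| = \<Lambda>\<close> everywhere, \<open>S\<close> is \<open>\<Lambda>\<close> times an
  isometry of \<open>L\<^sup>p(I)\<close>.  For \<open>f = 0\<close> the fixed point equation is \<open>g = S (g - b)\<close>, solved by
  the Neumann series \<open>g = - (\<Sum>j\<ge>1. S\<^sup>j b)\<close>; it gives \<open>\<parallel>g\<parallel> \<le> C \<parallel>b\<parallel>\<close>, and \<open>b = g - S\<^sup>-\<^sup>1 g\<close>
  gives \<open>\<parallel>b\<parallel> \<le> C' \<parallel>g\<parallel>\<close>.  So \<open>b \<mapsto> 0 *\<^sub>T b\<close> is a linear isomorphism onto its image, the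
  range of \<open>S\<close>.  That range is closed, being the zero set of the bounded operator
  \<open>u \<mapsto> u - S (u \<circ> L\<^sub>1 / \<alpha>\<^sub>1)\<close>, so it contains the closed span of the \<open>0 *\<^sub>T b\<^sub>m\<close>, and an
  isomorphism onto a closed subspace maps a Schauder basis to a Schauder basis of the closed
  span of its image.
\<close>

section \<open>Integrals of \<open>p\<close>-th powers\<close>

text \<open>Only the quasi-triangle inequality \<open>abs_add_powr_le\<close> is used below.\<close>

definition Lp_norm_pow :: "real \<Rightarrow> real set \<Rightarrow> (real \<Rightarrow> real) \<Rightarrow> real" where
  "Lp_norm_pow p I f = (\<integral>t. \<bar>f t\<bar> powr p \<partial>lebesgue_on I)"

lemma Lp_norm_eq_Lp_norm_pow: "Lp_norm p I f = Lp_norm_pow p I f powr (1 / p)"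
  by (simp add: Lp_norm_def Lp_norm_pow_def)

lemma Lp_norm_pow_nonneg: "0 \<le> Lp_norm_pow p I f"
  unfolding Lp_norm_pow_def by (rule Bochner_Integration.integral_nonneg) auto

lemma in_Lp_measurable: "in_Lp p I f \<Longrightarrow> f \<in> borel_measurable (lebesgue_on I)"
  by (simp add: in_Lp_def)

lemma in_Lp_integrable: "in_Lp p I f \<Longrightarrow> integrable (lebesgue_on I) (\<lambda>t. \<bar>f t\<bar> powr p)"
  by (simp add: in_Lp_def)

lemma in_Lp_zero: "in_Lp p I (\<lambda>_. 0)"
  by (simp add: in_Lp_def)

lemma
  assumes f: "f \<in> borel_measurable (lebesgue_on I)" and G: "integrable (lebesgue_on I) G"
    and le: "\<And>t. t \<in> I \<Longrightarrow> \<bar>f t\<bar> powr p \<le> G t"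
  shows in_Lp_dominated: "in_Lp p I f"
    and Lp_norm_pow_le_integral: "Lp_norm_pow p I f \<le> integral\<^sup>L (lebesgue_on I) G"
proof -
  have "integrable (lebesgue_on I) (\<lambda>t. \<bar>f t\<bar> powr p)"
    by (rule Bochner_Integration.integrable_bound[OF G])
       (use f in \<open>auto simp: space_restrict_space intro!: AE_I2 order.trans[OF le abs_ge_self]\<close>)
  then show "in_Lp p I f" "Lp_norm_pow p I f \<le> integral\<^sup>L (lebesgue_on I) G"
    using f G le unfolding in_Lp_def Lp_norm_pow_def
    by (auto intro!: integral_mono simp: space_restrict_space)
qed

lemma abs_add_powr_le:
  fixes a b p :: real
  assumes "0 \<le> p"
  shows "\<bar>a + b\<bar> powr p \<le> 2 powr p * (\<bar>a\<bar> powr p + \<bar>b\<bar> powr p)"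
proof -
  have "\<bar>a + b\<bar> powr p \<le> (2 * max \<bar>a\<bar> \<bar>b\<bar>) powr p"
    using assms by (intro powr_mono2) auto
  also have "\<dots> = 2 powr p * max \<bar>a\<bar> \<bar>b\<bar> powr p"
    by (simp add: powr_mult)
  also have "max \<bar>a\<bar> \<bar>b\<bar> powr p \<le> \<bar>a\<bar> powr p + \<bar>b\<bar> powr p"
    by (cases "\<bar>a\<bar> \<le> \<bar>b\<bar>") (auto simp: max_def)
  finally show ?thesis
    by simp
qed

lemma mult_le_root_if_mult_powr_le:
  fixes a r p R :: real
  assumes "0 \<le> a" "0 < r" "r \<le> 1" "1 \<le> p" and le: "r * a powr p \<le> R"
  shows "r * a \<le> R powr (1 / p)"
proof -
  have "r powr p \<le> r powr 1"
    using assms by (intro powr_mono') auto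
  then have "(r * a) powr p \<le> r * a powr p"
    using assms by (simp add: powr_mult mult_right_mono)
  then have "((r * a) powr p) powr (1 / p) \<le> R powr (1 / p)"
    using le assms by (intro powr_mono2) auto
  then show ?thesis
    using assms by (simp add: powr_powr)
qed

lemma
  assumes p: "0 \<le> p" and f: "in_Lp p I f" and g: "in_Lp p I g"
  shows in_Lp_add: "in_Lp p I (\<lambda>t. f t + g t)"
    and Lp_norm_pow_add_le:
      "Lp_norm_pow p I (\<lambda>t. f t + g t) \<le> 2 powr p * (Lp_norm_pow p I f + Lp_norm_pow p I g)"
proof -
  have m: "(\<lambda>t. f t + g t) \<in> borel_measurable (lebesgue_on I)"
    using in_Lp_measurable[OF f] in_Lp_measurable[OF g] by measurable
  have G: "integrable (lebesgue_on I) (\<lambda>t. 2 powr p * (\<bar>f t\<bar> powr p + \<bar>g t\<bar> powr p))"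
    using in_Lp_integrable[OF f] in_Lp_integrable[OF g] by auto
  note dominated = m G abs_add_powr_le[OF p]
  show "in_Lp p I (\<lambda>t. f t + g t)"
    by (rule in_Lp_dominated[OF dominated])
  show "Lp_norm_pow p I (\<lambda>t. f t + g t) \<le> 2 powr p * (Lp_norm_pow p I f + Lp_norm_pow p I g)"
    using Lp_norm_pow_le_integral[OF dominated] in_Lp_integrable[OF f] in_Lp_integrable[OF g]
    by (simp add: Lp_norm_pow_def)
qed

lemma
  assumes f: "in_Lp p I f"
  shows in_Lp_cmult: "in_Lp p I (\<lambda>t. c * f t)"
    and Lp_norm_pow_cmult: "Lp_norm_pow p I (\<lambda>t. c * f t) = \<bar>c\<bar> powr p * Lp_norm_pow p I f"
  using f by (auto simp: in_Lp_def Lp_norm_pow_def abs_mult powr_mult)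

lemma
  assumes p: "0 \<le> p" and f: "in_Lp p I f" and g: "in_Lp p I g"
  shows in_Lp_diff: "in_Lp p I (\<lambda>t. f t - g t)"
    and Lp_norm_pow_diff_le:
      "Lp_norm_pow p I (\<lambda>t. f t - g t) \<le> 2 powr p * (Lp_norm_pow p I f + Lp_norm_pow p I g)"
  using in_Lp_add[OF p f in_Lp_cmult[OF g, of "-1"]]
    Lp_norm_pow_add_le[OF p f in_Lp_cmult[OF g, of "-1"]] Lp_norm_pow_cmult[OF g, of "-1"]
  by simp_all

lemma in_Lp_sum:
  fixes n :: nat
  assumes "0 \<le> p" and "\<And>m. m < n \<Longrightarrow> in_Lp p I (y m)"
  shows "in_Lp p I (\<lambda>t. \<Sum>m<n. c m * y m t)"
  using assms(2)
proof (induction n)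
  case 0
  then show ?case
    by (simp add: in_Lp_zero)
next
  case (Suc n)
  then show ?case
    using in_Lp_add[OF assms(1) Suc.IH in_Lp_cmult[of p I "y n" "c n"]] by simp
qed

lemma Lp_norm_pow_cong_AE:
  assumes "f \<in> borel_measurable (lebesgue_on I)" "g \<in> borel_measurable (lebesgue_on I)"
    and "AE t in lebesgue_on I. f t = g t"
  shows "Lp_norm_pow p I f = Lp_norm_pow p I g"
  unfolding Lp_norm_pow_def using assms by (intro integral_cong_AE) auto

lemma AE_zero_if_Lp_norm_pow_eq_0:
  assumes f: "in_Lp p I f" and "Lp_norm_pow p I f = 0"
  shows "AE t in lebesgue_on I. f t = 0"
proof -
  have "AE t in lebesgue_on I. \<bar>f t\<bar> powr p = 0"
    using assms unfolding Lp_norm_pow_def in_Lp_def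
    by (subst (asm) integral_nonneg_eq_0_iff_AE) auto
  then show ?thesis
    by eventually_elim simp
qed

lemma nn_integral_eq_Lp_norm_pow:
  "in_Lp p I f \<Longrightarrow> (\<integral>\<^sup>+t. ennreal (\<bar>f t\<bar> powr p) \<partial>lebesgue_on I) = ennreal (Lp_norm_pow p I f)"
  unfolding Lp_norm_pow_def by (rule nn_integral_eq_integral) (auto simp: in_Lp_def)

lemma
  assumes f: "f \<in> borel_measurable (lebesgue_on I)" and c: "0 \<le> c"
    and le: "(\<integral>\<^sup>+t. ennreal (\<bar>f t\<bar> powr p) \<partial>lebesgue_on I) \<le> ennreal c"
  shows in_Lp_if_nn_integral_le: "in_Lp p I f"
    and Lp_norm_pow_le_if_nn_integral_le: "Lp_norm_pow p I f \<le> c"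
proof -
  have "integrable (lebesgue_on I) (\<lambda>t. \<bar>f t\<bar> powr p)"
    using f le by (subst integrable_iff_bounded) (auto simp: top.not_eq_extremum intro: le_less_trans)
  then show Lp: "in_Lp p I f"
    using f by (simp add: in_Lp_def)
  show "Lp_norm_pow p I f \<le> c"
    using nn_integral_eq_Lp_norm_pow[OF Lp] le c by simp
qed

lemma Lp_tendsto_iff_Lp_norm_pow:
  assumes "0 < p"
  shows "Lp_tendsto p I s f \<longleftrightarrow> (\<lambda>n. Lp_norm_pow p I (\<lambda>t. s n t - f t)) \<longlonglongrightarrow> 0"
proof
  assume "Lp_tendsto p I s f"
  then have "(\<lambda>n. (Lp_norm_pow p I (\<lambda>t. s n t - f t) powr (1 / p)) powr p) \<longlonglongrightarrow> 0"
    unfolding Lp_tendsto_def Lp_norm_eq_Lp_norm_pow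
    by (rule tendsto_zero_powrI[OF _ tendsto_const]) (use assms in auto)
  then show "(\<lambda>n. Lp_norm_pow p I (\<lambda>t. s n t - f t)) \<longlonglongrightarrow> 0"
    using assms by (simp add: powr_powr Lp_norm_pow_nonneg)
next
  assume "(\<lambda>n. Lp_norm_pow p I (\<lambda>t. s n t - f t)) \<longlonglongrightarrow> 0"
  then show "Lp_tendsto p I s f"
    unfolding Lp_tendsto_def Lp_norm_eq_Lp_norm_pow
    by (rule tendsto_zero_powrI[OF _ tendsto_const]) (use assms Lp_norm_pow_nonneg in auto)
qed

lemma Lp_norm_less_iff:
  assumes "0 < p" "0 < e"
  shows "Lp_norm p I f < e \<longleftrightarrow> Lp_norm_pow p I f < e powr p"
proof
  assume "Lp_norm p I f < e"
  then have "(Lp_norm_pow p I f powr (1 / p)) powr p < e powr p"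
    using assms by (intro powr_less_mono2) (auto simp: Lp_norm_eq_Lp_norm_pow)
  then show "Lp_norm_pow p I f < e powr p"
    using assms by (simp add: powr_powr Lp_norm_pow_nonneg)
next
  assume "Lp_norm_pow p I f < e powr p"
  then have "Lp_norm_pow p I f powr (1 / p) < (e powr p) powr (1 / p)"
    using assms by (intro powr_less_mono2) (auto simp: Lp_norm_pow_nonneg)
  then show "Lp_norm p I f < e"
    using assms by (simp add: Lp_norm_eq_Lp_norm_pow powr_powr)
qed

lemma Lp_closed_span_approx:
  assumes "0 < p" "f \<in> Lp_closed_span p I y" "0 < e"
  obtains k c where "Lp_norm_pow p I (\<lambda>t. f t - (\<Sum>m<k. c m * y m t)) < e"
proof -
  have "0 < e powr (1 / p)"
    using assms by simp
  then obtain k c where "Lp_norm p I (\<lambda>t. f t - (\<Sum>m<k. c m * y m t)) < e powr (1 / p)"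
    using assms(2) unfolding Lp_closed_span_def by blast
  then have "Lp_norm_pow p I (\<lambda>t. f t - (\<Sum>m<k. c m * y m t)) < e"
    using assms by (simp add: Lp_norm_less_iff powr_powr)
  then show thesis
    by (rule that)
qed

lemma generator_in_Lp_closed_span:
  assumes "in_Lp p I (y m)"
  shows "y m \<in> Lp_closed_span p I y"
proof -
  let ?c = "\<lambda>i. if i = m then 1 else 0 :: real"
  have "(\<Sum>i<Suc m. ?c i * y i t) = y m t" for t
    by (simp add: if_distrib cong: if_cong)
  then have "Lp_norm p I (\<lambda>t. y m t - (\<Sum>i<Suc m. ?c i * y i t)) = 0"
    by (simp add: Lp_norm_def)
  then have "\<exists>k c. Lp_norm p I (\<lambda>t. y m t - (\<Sum>i<k. c i * y i t)) < e" if "0 < e" for e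
    using that by metis
  then show ?thesis
    using assms unfolding Lp_closed_span_def by blast
qed

section \<open>Nonsingular maps and affine changes of variables\<close>

lemma AE_comp_nonsingular:
  assumes g: "g \<in> M \<rightarrow>\<^sub>M M"
    and le: "\<And>h::'a \<Rightarrow> ennreal. h \<in> borel_measurable M \<Longrightarrow>
      (\<integral>\<^sup>+t. h (g t) \<partial>M) \<le> ennreal C * (\<integral>\<^sup>+t. h t \<partial>M)"
    and P: "AE s in M. P s"
  shows "AE t in M. P (g t)"
proof -
  from P obtain Z where Z: "{s \<in> space M. \<not> P s} \<subseteq> Z" "Z \<in> sets M" "emeasure M Z = 0"
    by (auto elim!: AE_E)
  have "(\<integral>\<^sup>+t. indicator Z (g t) \<partial>M) \<le> ennreal C * (\<integral>\<^sup>+t. indicator Z t \<partial>M)"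
    using Z(2) by (intro le) simp
  also have "(\<integral>\<^sup>+t. indicator Z t \<partial>M) = 0"
    using Z by simp
  finally have "(\<integral>\<^sup>+t. indicator Z (g t) \<partial>M) = 0"
    by simp
  then have "AE t in M. (indicator Z (g t) :: ennreal) = 0"
    using Z(2) g by (subst (asm) nn_integral_0_iff_AE) auto
  then show ?thesis
  proof (rule AE_mp[OF _ AE_I2[OF impI]])
    fix t assume t: "t \<in> space M" "(indicator Z (g t) :: ennreal) = 0"
    then have "g t \<in> space M"
      using measurable_space[OF g] by auto
    then show "P (g t)"
      using t Z(1) by (auto simp: indicator_def split: if_splits)
  qed
qed

lemma affine_lebesgue_measurable: "(\<lambda>y::real. a + c * y) \<in> lebesgue \<rightarrow>\<^sub>M lebesgue"
proof (cases "c = 0")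
  case False
  then show ?thesis
    using lebesgue_affine_measurable[where c="\<lambda>_. c" and t=a] by simp
qed simp

lemma nn_integral_affine_indicator:
  fixes h :: "real \<Rightarrow> ennreal"
  assumes h: "h \<in> borel_measurable (lebesgue_on I)" and I: "I \<in> sets lebesgue" and c: "0 < c"
  shows "(\<integral>\<^sup>+t. h (a + c * t) * indicator I (a + c * t) \<partial>lebesgue)
    = ennreal (1 / c) * (\<integral>\<^sup>+t. h t \<partial>lebesgue_on I)"
proof -
  define H where "H y = h y * indicator I y" for y
  have [measurable]: "H \<in> borel_measurable lebesgue"
    using h I unfolding H_def by (subst (asm) borel_measurable_restrict_space_iff_ennreal) auto
  have "(\<integral>\<^sup>+t. H t \<partial>lebesgue) = ennreal c * (\<integral>\<^sup>+t. H (a + c * t) \<partial>lebesgue)"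
    using nn_integral_real_affine_lebesgue[of H c a] c by simp
  then have "ennreal (1 / c) * (\<integral>\<^sup>+t. H t \<partial>lebesgue) = (\<integral>\<^sup>+t. H (a + c * t) \<partial>lebesgue)"
    using c by (simp add: mult.assoc[symmetric] ennreal_mult[symmetric])
  then show ?thesis
    using I by (simp add: H_def nn_integral_restrict_space)
qed

section \<open>The inverse maps \<open>L\<^sub>n\<^sup>-\<^sup>1\<close> glued along the partition\<close>

locale fractal_partition =
  fixes p \<Lambda> :: real and N :: nat and x :: "nat \<Rightarrow> real" and \<alpha> :: "nat \<Rightarrow> real \<Rightarrow> real"
  assumes p_ge_1: "1 \<le> p"
    and N_ge_2: "2 \<le> N"
    and x_less_Suc: "\<And>i. i < N \<Longrightarrow> x i < x (Suc i)"
    and \<alpha>_measurable: "\<And>n. 1 \<le> n \<Longrightarrow> n \<le> N \<Longrightarrow> \<alpha> n \<in> borel_measurable (lebesgue_on (Ival x N))"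
    and \<alpha>_values: "\<And>n t. 1 \<le> n \<Longrightarrow> n \<le> N \<Longrightarrow> t \<in> Ival x N \<Longrightarrow> \<alpha> n t \<in> {\<Lambda>, - \<Lambda>}"
    and \<Lambda>_pos: "0 < \<Lambda>" and \<Lambda>_less_1: "\<Lambda> < 1"
begin

abbreviation "I \<equiv> Ival x N"
abbreviation "M \<equiv> lebesgue_on I"

lemma p_pos: "0 < p"
  using p_ge_1 by simp

lemma x_less: "i < j \<Longrightarrow> j \<le> N \<Longrightarrow> x i < x j"
proof (induction j)
  case (Suc j)
  then show ?case
    using x_less_Suc[of j] by (cases "i = j") auto
qed simp

lemma x_le: "i \<le> j \<Longrightarrow> j \<le> N \<Longrightarrow> x i \<le> x j"
  using x_less[of i j] by (cases "i = j") auto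

lemma x_pred_less: "n \<in> {1..N} \<Longrightarrow> x (n - 1) < x n"
  using x_less[of "n - 1" n] by simp

lemma I_eq: "I = {x 0..x N}"
  by (simp add: Ival_def)

lemma space_M [simp]: "space M = I"
  by (simp add: space_restrict_space)

lemma I_sets [measurable]: "I \<in> sets lebesgue"
  by (simp add: I_eq)

definition Ipiece :: "nat \<Rightarrow> real set" where
  "Ipiece n = (if n = 1 then {x 0..x 1} else {x (n - 1)<..x n})"

lemma Ipiece_sets [measurable]: "Ipiece n \<in> sets lebesgue"
  by (simp add: Ipiece_def)

lemma
  assumes t: "t \<in> I"
  shows piece_mem: "piece x N t \<in> {1..N}"
    and mem_Ipiece_piece: "t \<in> Ipiece (piece x N t)"
proof -
  let ?P = "\<lambda>n. 1 \<le> n \<and> t \<le> x n"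
  have "?P N"
    using t N_ge_2 by (auto simp: I_eq)
  then have least: "?P (piece x N t)" and "piece x N t \<le> N"
    unfolding piece_def by (rule LeastI, rule Least_le)
  then show "piece x N t \<in> {1..N}"
    by simp
  have "\<not> ?P (piece x N t - 1) \<or> piece x N t = 1"
    using least not_less_Least[of "piece x N t - 1" ?P] unfolding piece_def by fastforce
  then show "t \<in> Ipiece (piece x N t)"
    using least t by (auto simp: Ipiece_def I_eq)
qed

lemma piece_eqI:
  assumes n: "n \<in> {1..N}" and t: "t \<in> Ipiece n"
  shows "piece x N t = n"
  unfolding piece_def
proof (rule Least_equality)
  show "1 \<le> n \<and> t \<le> x n"
    using n t by (auto simp: Ipiece_def split: if_splits)
  show "n \<le> m" if "1 \<le> m \<and> t \<le> x m" for m
  proof (rule ccontr)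
    assume "\<not> n \<le> m"
    then have "x m \<le> x (n - 1)" and "n \<noteq> 1"
      using that n x_le[of m "n - 1"] by auto
    then show False
      using that t by (auto simp: Ipiece_def)
  qed
qed

lemma Ipiece_subset:
  assumes "n \<in> {1..N}"
  shows "Ipiece n \<subseteq> I"
proof -
  have "x 0 \<le> x (n - 1)" "x n \<le> x N" "x 1 \<le> x N"
    using assms N_ge_2 x_le[of 0 "n - 1"] x_le[of n N] x_le[of 1 N] by auto
  then show ?thesis
    by (auto simp: Ipiece_def I_eq)
qed

lemma sum_indicator_Ipiece:
  fixes f :: "nat \<Rightarrow> 'a::semiring_1"
  assumes "t \<in> I"
  shows "(\<Sum>n\<in>{1..N}. f n * indicator (Ipiece n) t) = f (piece x N t)"
proof -
  have "f n * indicator (Ipiece n) t = (if n = piece x N t then f n else 0)" if n: "n \<in> {1..N}" for n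
  proof (cases "t \<in> Ipiece n")
    case True
    then show ?thesis
      using piece_eqI[OF n True] by simp
  next
    case False
    then have "n \<noteq> piece x N t"
      using mem_Ipiece_piece[OF assms] by auto
    with False show ?thesis
      by simp
  qed
  then have "(\<Sum>n\<in>{1..N}. f n * indicator (Ipiece n) t) = (\<Sum>n\<in>{1..N}. if n = piece x N t then f n else 0)"
    by (rule sum.cong[OF refl])
  also have "\<dots> = f (piece x N t)"
    using piece_mem[OF assms] by simp
  finally show ?thesis .
qed

definition L1 :: "real \<Rightarrow> real" where
  "L1 s = x 0 + (s - x 0) * (x 1 - x 0) / (x N - x 0)"

lemma Linv_L1: "Linv x N 1 (L1 s) = s"
  using x_less[of 0 1] x_less[of 0 N] N_ge_2 by (simp add: Linv_def L1_def)

lemma Linv_affine: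
  "Linv x N n t = (x 0 - x (n - 1) * ((x N - x 0) / (x n - x (n - 1))))
    + (x N - x 0) / (x n - x (n - 1)) * t"
  by (simp add: Linv_def divide_inverse algebra_simps)

lemma L1_affine:
  "L1 s = (x 0 - x 0 * ((x 1 - x 0) / (x N - x 0))) + (x 1 - x 0) / (x N - x 0) * s"
  by (simp add: L1_def divide_inverse algebra_simps)

lemma Linv_mem_I_iff:
  assumes "n \<in> {1..N}"
  shows "Linv x N n t \<in> I \<longleftrightarrow> x (n - 1) \<le> t \<and> t \<le> x n"
proof -
  define q where "q = (t - x (n - 1)) / (x n - x (n - 1))"
  have d: "0 < x n - x (n - 1)" and K: "0 < x N - x 0"
    using x_pred_less[OF assms] x_less[of 0 N] N_ge_2 by auto
  have "Linv x N n t = x 0 + q * (x N - x 0)"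
    by (simp add: Linv_def q_def)
  then have "Linv x N n t \<in> I \<longleftrightarrow> 0 \<le> q * (x N - x 0) \<and> q * (x N - x 0) \<le> 1 * (x N - x 0)"
    by (auto simp: I_eq)
  also have "\<dots> \<longleftrightarrow> 0 \<le> q \<and> q \<le> 1"
    using K by (simp add: zero_le_mult_iff mult_le_cancel_right)
  also have "\<dots> \<longleftrightarrow> x (n - 1) \<le> t \<and> t \<le> x n"
    using d by (simp add: q_def zero_le_divide_iff divide_le_eq)
  finally show ?thesis .
qed

definition \<phi> :: "real \<Rightarrow> real" where
  "\<phi> t = Linv x N (piece x N t) t"

definition weight :: "real \<Rightarrow> real" where
  "weight t = \<alpha> (piece x N t) (\<phi> t)"

lemma \<phi>_eq_Linv: "n \<in> {1..N} \<Longrightarrow> t \<in> Ipiece n \<Longrightarrow> \<phi> t = Linv x N n t"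
  by (simp add: \<phi>_def piece_eqI)

lemma \<phi>_in_I:
  assumes "t \<in> I"
  shows "\<phi> t \<in> I"
proof -
  have "t \<in> Ipiece (piece x N t)"
    by (rule mem_Ipiece_piece[OF assms])
  then have "x (piece x N t - 1) \<le> t \<and> t \<le> x (piece x N t)"
    by (auto simp: Ipiece_def split: if_splits)
  then show ?thesis
    unfolding \<phi>_def using Linv_mem_I_iff[OF piece_mem[OF assms]] by blast
qed

lemma L1_mem_Ipiece: "s \<in> I \<Longrightarrow> L1 s \<in> Ipiece 1"
  using Linv_mem_I_iff[of 1 "L1 s"] Linv_L1[of s] N_ge_2 by (simp add: Ipiece_def)

lemma L1_in_I: "s \<in> I \<Longrightarrow> L1 s \<in> I"
  using L1_mem_Ipiece Ipiece_subset[of 1] N_ge_2 by auto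

lemma \<phi>_L1: "s \<in> I \<Longrightarrow> \<phi> (L1 s) = s"
  using \<phi>_eq_Linv[of 1 "L1 s"] L1_mem_Ipiece Linv_L1[of s] N_ge_2 by simp

lemma weight_L1:
  assumes "s \<in> I"
  shows "weight (L1 s) = \<alpha> 1 s"
proof -
  have "piece x N (L1 s) = 1"
    using piece_eqI[of 1 "L1 s"] L1_mem_Ipiece[OF assms] N_ge_2 by simp
  then show ?thesis
    unfolding weight_def \<phi>_L1[OF assms] by simp
qed

lemma abs_weight: "t \<in> I \<Longrightarrow> \<bar>weight t\<bar> = \<Lambda>"
  using \<alpha>_values[of "piece x N t" "\<phi> t"] piece_mem[of t] \<phi>_in_I[of t] \<Lambda>_pos
  by (auto simp: weight_def)

lemma abs_\<alpha>1: "s \<in> I \<Longrightarrow> \<bar>\<alpha> 1 s\<bar> = \<Lambda>"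
  using \<alpha>_values[of 1 s] N_ge_2 \<Lambda>_pos by auto

lemma \<alpha>1_measurable [measurable]: "\<alpha> 1 \<in> borel_measurable M"
  using \<alpha>_measurable[of 1] N_ge_2 by simp

lemma \<phi>_measurable [measurable]: "\<phi> \<in> M \<rightarrow>\<^sub>M M"
proof (rule measurable_piecewise_restrict[where C="Ipiece ` {1..N}"])
  show "countable (Ipiece ` {1..N})"
    by simp
  show "space M \<subseteq> \<Union> (Ipiece ` {1..N})"
    using mem_Ipiece_piece piece_mem by fastforce
  fix \<Omega> assume "\<Omega> \<in> Ipiece ` {1..N}"
  then obtain n where n: "n \<in> {1..N}" and \<Omega>: "\<Omega> = Ipiece n"
    by auto
  show "\<Omega> \<inter> space M \<in> sets M"
    unfolding \<Omega> by (simp add: sets_restrict_space_iff Ipiece_sets)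
  have "Linv x N n \<in> restrict_space lebesgue (I \<inter> Ipiece n) \<rightarrow>\<^sub>M M"
  proof (rule measurable_restrict_space3)
    show "Linv x N n \<in> lebesgue \<rightarrow>\<^sub>M lebesgue"
      unfolding Linv_affine by (rule affine_lebesgue_measurable)
    show "Linv x N n \<in> I \<inter> Ipiece n \<rightarrow> I"
      using Linv_mem_I_iff[OF n] by (auto simp: Ipiece_def split: if_splits)
  qed
  then show "\<phi> \<in> restrict_space M \<Omega> \<rightarrow>\<^sub>M M"
    unfolding \<Omega> using n
    by (subst measurable_cong[where g="Linv x N n"])
       (auto simp: restrict_restrict_space space_restrict_space \<phi>_eq_Linv Int_commute)
qed

lemma indicator_Ipiece_measurable [measurable]:
  "(indicator (Ipiece n) :: real \<Rightarrow> 'a::{zero_neq_one, topological_space}) \<in> borel_measurable M"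
  by (rule measurable_restrict_space1) simp

lemma weight_measurable [measurable]: "weight \<in> borel_measurable M"
proof -
  have "(\<lambda>t. \<alpha> n (\<phi> t)) \<in> borel_measurable M" if "n \<in> {1..N}" for n
    using that \<alpha>_measurable by (intro measurable_compose[OF \<phi>_measurable]) auto
  then have "(\<lambda>t. \<Sum>n\<in>{1..N}. \<alpha> n (\<phi> t) * indicator (Ipiece n) t) \<in> borel_measurable M"
    by (intro borel_measurable_sum borel_measurable_times) auto
  then show ?thesis
    by (rule measurable_cong[THEN iffD1, rotated]) (simp only: space_M weight_def, rule sum_indicator_Ipiece)
qed

lemma L1_measurable [measurable]: "L1 \<in> M \<rightarrow>\<^sub>M M"
proof (rule measurable_restrict_space3)
  show "L1 \<in> lebesgue \<rightarrow>\<^sub>M lebesgue"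
    unfolding L1_affine by (rule affine_lebesgue_measurable)
  show "L1 \<in> I \<rightarrow> I"
    using L1_in_I by auto
qed

lemma nn_integral_\<phi>_Ipiece:
  fixes h :: "real \<Rightarrow> ennreal"
  assumes h: "h \<in> borel_measurable M" and n: "n \<in> {1..N}"
  shows "(\<integral>\<^sup>+t. h (\<phi> t) * indicator (Ipiece n) t \<partial>M)
    = ennreal ((x n - x (n - 1)) / (x N - x 0)) * (\<integral>\<^sup>+t. h t \<partial>M)"
proof -
  define c where "c = (x N - x 0) / (x n - x (n - 1))"
  define a where "a = x 0 - x (n - 1) * c"
  have c: "0 < c"
    using x_pred_less[OF n] x_less[of 0 N] N_ge_2 by (simp add: c_def)
  have Linv: "Linv x N n t = a + c * t" for t
    by (simp add: a_def c_def Linv_affine)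
  have "h (\<phi> t) * indicator (Ipiece n) t * indicator I t
      = h (a + c * t) * indicator I (a + c * t) * indicator (Ipiece n) t" for t
  proof (cases "t \<in> Ipiece n")
    case True
    then have "t \<in> I" and "\<phi> t = a + c * t"
      using Ipiece_subset[OF n] \<phi>_eq_Linv[OF n] Linv by auto
    then show ?thesis
      using True \<phi>_in_I[of t] by simp
  qed simp
  then have "(\<integral>\<^sup>+t. h (\<phi> t) * indicator (Ipiece n) t \<partial>M)
      = (\<integral>\<^sup>+t. h (a + c * t) * indicator I (a + c * t) * indicator (Ipiece n) t \<partial>lebesgue)"
    by (simp add: nn_integral_restrict_space)
  also have "\<dots> = (\<integral>\<^sup>+t. h (a + c * t) * indicator I (a + c * t) \<partial>lebesgue)"
  proof (rule nn_integral_cong_AE)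
    have "AE t in lebesgue. t \<noteq> x (n - 1)"
      by (rule AE_completion) (rule AE_lborel_singleton)
    then show "AE t in lebesgue. h (a + c * t) * indicator I (a + c * t) * indicator (Ipiece n) t
        = h (a + c * t) * indicator I (a + c * t)"
      by eventually_elim
        (use Linv_mem_I_iff[OF n] in \<open>auto simp: Linv Ipiece_def split: split_indicator\<close>)
  qed
  also have "\<dots> = ennreal (1 / c) * (\<integral>\<^sup>+t. h t \<partial>M)"
    by (rule nn_integral_affine_indicator[OF h I_sets c])
  finally show ?thesis
    by (simp add: c_def)
qed

lemma nn_integral_\<phi>:
  fixes h :: "real \<Rightarrow> ennreal"
  assumes h [measurable]: "h \<in> borel_measurable M"
  shows "(\<integral>\<^sup>+t. h (\<phi> t) \<partial>M) = (\<integral>\<^sup>+t. h t \<partial>M)"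
proof -
  have "(\<integral>\<^sup>+t. h (\<phi> t) \<partial>M) = (\<integral>\<^sup>+t. (\<Sum>n\<in>{1..N}. h (\<phi> t) * indicator (Ipiece n) t) \<partial>M)"
    by (intro nn_integral_cong) (simp only: space_M, rule sum_indicator_Ipiece[symmetric])
  also have "\<dots> = (\<Sum>n\<in>{1..N}. \<integral>\<^sup>+t. h (\<phi> t) * indicator (Ipiece n) t \<partial>M)"
    by (rule nn_integral_sum) measurable
  also have "\<dots> = (\<Sum>n\<in>{1..N}. ennreal ((x n - x (n - 1)) / (x N - x 0))) * (\<integral>\<^sup>+t. h t \<partial>M)"
    by (simp add: nn_integral_\<phi>_Ipiece sum_distrib_right)
  also have "(\<Sum>n\<in>{1..N}. ennreal ((x n - x (n - 1)) / (x N - x 0))) = 1"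
  proof -
    have "(\<Sum>n\<in>{1..N}. x n - x (n - 1)) = (\<Sum>i<N. x (Suc i) - x i)"
      by (rule sum.reindex_bij_witness[where i=Suc and j="\<lambda>n. n - 1"]) auto
    then have "(\<Sum>n\<in>{1..N}. (x n - x (n - 1)) / (x N - x 0)) = 1"
      using x_less[of 0 N] N_ge_2 by (simp add: sum_divide_distrib[symmetric] sum_lessThan_telescope)
    moreover have "0 \<le> (x n - x (n - 1)) / (x N - x 0)" if "n \<in> {1..N}" for n
      using x_pred_less[OF that] x_less[of 0 N] N_ge_2 by simp
    ultimately show ?thesis
      by (subst sum_ennreal) auto
  qed
  finally show ?thesis
    by simp
qed

lemma nn_integral_L1_le:
  fixes h :: "real \<Rightarrow> ennreal"
  assumes h: "h \<in> borel_measurable M"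
  shows "(\<integral>\<^sup>+t. h (L1 t) \<partial>M) \<le> ennreal ((x N - x 0) / (x 1 - x 0)) * (\<integral>\<^sup>+t. h t \<partial>M)"
proof -
  define c where "c = (x 1 - x 0) / (x N - x 0)"
  define a where "a = x 0 - x 0 * c"
  have c: "0 < c"
    using x_less[of 0 1] x_less[of 0 N] N_ge_2 by (simp add: c_def)
  have L1: "L1 t = a + c * t" for t
    by (simp add: a_def c_def L1_affine)
  have "(\<integral>\<^sup>+t. h (L1 t) \<partial>M) = (\<integral>\<^sup>+t. h (a + c * t) * indicator I (a + c * t) * indicator I t \<partial>lebesgue)"
    using L1_in_I by (auto simp: nn_integral_restrict_space L1[symmetric] intro!: nn_integral_cong split: split_indicator)
  also have "\<dots> \<le> (\<integral>\<^sup>+t. h (a + c * t) * indicator I (a + c * t) \<partial>lebesgue)"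
    by (intro nn_integral_mono) (simp split: split_indicator)
  also have "\<dots> = ennreal (1 / c) * (\<integral>\<^sup>+t. h t \<partial>M)"
    by (rule nn_integral_affine_indicator[OF h I_sets c])
  finally show ?thesis
    by (simp add: c_def)
qed

lemma AE_\<phi>: "AE s in M. P s \<Longrightarrow> AE t in M. P (\<phi> t)"
  by (rule AE_comp_nonsingular[where C=1]) (auto simp: nn_integral_\<phi>)

lemma AE_L1: "AE s in M. P s \<Longrightarrow> AE t in M. P (L1 t)"
  by (rule AE_comp_nonsingular[OF L1_measurable nn_integral_L1_le])

section \<open>Fixed points of \<open>T\<close>\<close>

lemma \<Lambda>_powr_pos: "0 < \<Lambda> powr p"
  using \<Lambda>_pos by simp

lemma \<Lambda>_powr_less_1: "\<Lambda> powr p < 1"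
  using powr_less_mono2[OF p_pos, of \<Lambda> 1] \<Lambda>_pos \<Lambda>_less_1 by simp

definition S :: "(real \<Rightarrow> real) \<Rightarrow> real \<Rightarrow> real" where
  "S g t = weight t * g (\<phi> t)"

definition S_left_inv :: "(real \<Rightarrow> real) \<Rightarrow> real \<Rightarrow> real" where
  "S_left_inv u s = u (L1 s) / \<alpha> 1 s"

text \<open>\<open>defect u\<close> vanishes almost everywhere exactly when \<open>u\<close> lies in the range of \<open>S\<close>
  (\<open>AE_defect_eq_0_if_AE_eq_S\<close>, \<open>T_fixpoint_if_AE_defect\<close>); being bounded, it shows that this
  range is closed.\<close>

definition defect :: "(real \<Rightarrow> real) \<Rightarrow> real \<Rightarrow> real" where
  "defect u t = u t - S (S_left_inv u) t"

lemma S_left_inv_S: "s \<in> I \<Longrightarrow> S_left_inv (S g) s = g s"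
  using abs_\<alpha>1[of s] weight_L1[of s] \<Lambda>_pos by (auto simp: S_def S_left_inv_def \<phi>_L1)

lemma defect_diff: "defect (\<lambda>t. u t - v t) t = defect u t - defect v t"
  by (simp add: defect_def S_def S_left_inv_def diff_divide_distrib algebra_simps)

lemma
  assumes u: "in_Lp p I u"
  shows in_Lp_S: "in_Lp p I (S u)"
    and Lp_norm_pow_S: "Lp_norm_pow p I (S u) = \<Lambda> powr p * Lp_norm_pow p I u"
proof -
  have u_meas [measurable]: "u \<in> borel_measurable M"
    using u by (rule in_Lp_measurable)
  have "(\<integral>\<^sup>+t. ennreal (\<bar>S u t\<bar> powr p) \<partial>M)
      = (\<integral>\<^sup>+t. ennreal (\<Lambda> powr p) * ennreal (\<bar>u (\<phi> t)\<bar> powr p) \<partial>M)"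
    by (intro nn_integral_cong)
       (simp add: S_def abs_mult powr_mult abs_weight ennreal_mult'[symmetric])
  also have "\<dots> = ennreal (\<Lambda> powr p) * (\<integral>\<^sup>+t. ennreal (\<bar>u (\<phi> t)\<bar> powr p) \<partial>M)"
    by (rule nn_integral_cmult) measurable
  also have "\<dots> = ennreal (\<Lambda> powr p * Lp_norm_pow p I u)"
    using u nn_integral_\<phi>[of "\<lambda>t. ennreal (\<bar>u t\<bar> powr p)"]
    by (simp add: nn_integral_eq_Lp_norm_pow ennreal_mult')
  finally have nn: "(\<integral>\<^sup>+t. ennreal (\<bar>S u t\<bar> powr p) \<partial>M) = ennreal (\<Lambda> powr p * Lp_norm_pow p I u)" .
  have "S u \<in> borel_measurable M"
    unfolding S_def[abs_def] by measurable
  moreover have "0 \<le> \<Lambda> powr p * Lp_norm_pow p I u"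
    by (simp add: Lp_norm_pow_nonneg)
  ultimately show Su: "in_Lp p I (S u)"
    using nn by (intro in_Lp_if_nn_integral_le) auto
  show "Lp_norm_pow p I (S u) = \<Lambda> powr p * Lp_norm_pow p I u"
    using nn_integral_eq_Lp_norm_pow[OF Su] nn Lp_norm_pow_nonneg
    by (simp add: Lp_norm_pow_nonneg)
qed

lemma
  assumes u: "in_Lp p I u"
  shows in_Lp_S_left_inv: "in_Lp p I (S_left_inv u)"
    and Lp_norm_pow_S_left_inv_le:
      "Lp_norm_pow p I (S_left_inv u) \<le> (x N - x 0) / (x 1 - x 0) / \<Lambda> powr p * Lp_norm_pow p I u"
proof -
  have u_meas [measurable]: "u \<in> borel_measurable M"
    using u by (rule in_Lp_measurable)
  have "(\<integral>\<^sup>+s. ennreal (\<bar>S_left_inv u s\<bar> powr p) \<partial>M)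
      = (\<integral>\<^sup>+s. ennreal (1 / \<Lambda> powr p) * ennreal (\<bar>u (L1 s)\<bar> powr p) \<partial>M)"
  proof (intro nn_integral_cong)
    fix s assume "s \<in> space M"
    then have "\<bar>S_left_inv u s\<bar> powr p = 1 / \<Lambda> powr p * \<bar>u (L1 s)\<bar> powr p"
      using abs_\<alpha>1[of s] \<Lambda>_pos by (simp add: S_left_inv_def abs_divide powr_divide)
    then show "ennreal (\<bar>S_left_inv u s\<bar> powr p) = ennreal (1 / \<Lambda> powr p) * ennreal (\<bar>u (L1 s)\<bar> powr p)"
      by (simp add: ennreal_mult'[symmetric])
  qed
  also have "\<dots> = ennreal (1 / \<Lambda> powr p) * (\<integral>\<^sup>+s. ennreal (\<bar>u (L1 s)\<bar> powr p) \<partial>M)"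
    by (rule nn_integral_cmult) measurable
  also have "\<dots> \<le> ennreal (1 / \<Lambda> powr p)
      * (ennreal ((x N - x 0) / (x 1 - x 0)) * (\<integral>\<^sup>+t. ennreal (\<bar>u t\<bar> powr p) \<partial>M))"
    by (intro mult_left_mono nn_integral_L1_le) auto
  also have "\<dots> = ennreal ((x N - x 0) / (x 1 - x 0) / \<Lambda> powr p * Lp_norm_pow p I u)"
    using u x_less[of 0 1] x_less[of 0 N] N_ge_2 Lp_norm_pow_nonneg[of p I u]
    by (simp add: nn_integral_eq_Lp_norm_pow ennreal_mult[symmetric])
  finally have "(\<integral>\<^sup>+s. ennreal (\<bar>S_left_inv u s\<bar> powr p) \<partial>M)
      \<le> ennreal ((x N - x 0) / (x 1 - x 0) / \<Lambda> powr p * Lp_norm_pow p I u)" .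
  moreover have "S_left_inv u \<in> borel_measurable M"
    unfolding S_left_inv_def[abs_def] by measurable
  moreover have "0 \<le> (x N - x 0) / (x 1 - x 0) / \<Lambda> powr p * Lp_norm_pow p I u"
    using x_less[of 0 1] x_less[of 0 N] N_ge_2 by (simp add: Lp_norm_pow_nonneg)
  ultimately show "in_Lp p I (S_left_inv u)"
    and "Lp_norm_pow p I (S_left_inv u) \<le> (x N - x 0) / (x 1 - x 0) / \<Lambda> powr p * Lp_norm_pow p I u"
    by (simp_all add: in_Lp_if_nn_integral_le Lp_norm_pow_le_if_nn_integral_le)
qed

lemma
  assumes u: "in_Lp p I u"
  shows in_Lp_defect: "in_Lp p I (defect u)"
    and Lp_norm_pow_defect_le:
      "Lp_norm_pow p I (defect u) \<le> 2 powr p * (1 + (x N - x 0) / (x 1 - x 0)) * Lp_norm_pow p I u"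
proof -
  note SS = in_Lp_S[OF in_Lp_S_left_inv[OF u]]
  show "in_Lp p I (defect u)"
    unfolding defect_def[abs_def] using in_Lp_diff[OF _ u SS] p_pos by simp
  have "Lp_norm_pow p I (defect u)
      \<le> 2 powr p * (Lp_norm_pow p I u + Lp_norm_pow p I (S (S_left_inv u)))"
    unfolding defect_def[abs_def] using Lp_norm_pow_diff_le[OF _ u SS] p_pos by simp
  also have "Lp_norm_pow p I (S (S_left_inv u)) \<le> (x N - x 0) / (x 1 - x 0) * Lp_norm_pow p I u"
    using Lp_norm_pow_S[OF in_Lp_S_left_inv[OF u]] Lp_norm_pow_S_left_inv_le[OF u]
      mult_left_mono[OF Lp_norm_pow_S_left_inv_le[OF u], of "\<Lambda> powr p"] \<Lambda>_powr_pos
    by simp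
  finally show "Lp_norm_pow p I (defect u) \<le> 2 powr p * (1 + (x N - x 0) / (x 1 - x 0)) * Lp_norm_pow p I u"
    by (simp add: algebra_simps)
qed

lemma AE_defect_eq_0_if_AE_eq_S:
  assumes "AE t in M. u t = S v t"
  shows "AE t in M. defect u t = 0"
proof -
  have "AE s in M. u (L1 s) = S v (L1 s)"
    by (rule AE_L1[OF assms])
  then have "AE s in M. S_left_inv u s = v s"
  proof (rule AE_mp[OF _ AE_I2[OF impI]])
    fix s assume "s \<in> space M" "u (L1 s) = S v (L1 s)"
    then show "S_left_inv u s = v s"
      using S_left_inv_S[of s v] by (simp add: S_left_inv_def)
  qed
  then have "AE t in M. S_left_inv u (\<phi> t) = v (\<phi> t)"
    by (rule AE_\<phi>)
  with assms show ?thesis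
    by eventually_elim (simp add: defect_def S_def)
qed

definition T_fixpoint :: "(real \<Rightarrow> real) \<Rightarrow> (real \<Rightarrow> real) \<Rightarrow> bool" where
  "T_fixpoint b g \<longleftrightarrow> in_Lp p I g \<and> (AE t in M. g t = S (\<lambda>s. g s - b s) t)"

lemma T_fixpoint_iff_fractal_T:
  "T_fixpoint b g \<longleftrightarrow> in_Lp p I g \<and> (AE t in M. fractal_T x N \<alpha> (\<lambda>_. 0) b g t = g t)"
proof -
  have "fractal_T x N \<alpha> (\<lambda>_. 0) b g t = S (\<lambda>s. g s - b s) t" if "t \<in> I" for t
    using that by (simp add: fractal_T_def Let_def S_def weight_def \<phi>_def)
  then have "(AE t in M. g t = S (\<lambda>s. g s - b s) t) \<longleftrightarrow> (AE t in M. fractal_T x N \<alpha> (\<lambda>_. 0) b g t = g t)"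
    by (intro AE_cong) auto
  then show ?thesis
    by (simp add: T_fixpoint_def)
qed

lemma T_fixpoint_lincomb:
  assumes "T_fixpoint b1 g1" "T_fixpoint b2 g2"
  shows "T_fixpoint (\<lambda>t. a * b1 t + c * b2 t) (\<lambda>t. a * g1 t + c * g2 t)"
proof -
  have "in_Lp p I (\<lambda>t. a * g1 t + c * g2 t)"
    using assms p_pos by (intro in_Lp_add in_Lp_cmult) (auto simp: T_fixpoint_def)
  moreover have "AE t in M. a * g1 t + c * g2 t
      = S (\<lambda>s. (a * g1 s + c * g2 s) - (a * b1 s + c * b2 s)) t"
  proof -
    have "AE t in M. g1 t = S (\<lambda>s. g1 s - b1 s) t" "AE t in M. g2 t = S (\<lambda>s. g2 s - b2 s) t"
      using assms by (simp_all add: T_fixpoint_def)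
    then show ?thesis
    proof eventually_elim
      case (elim t)
      show ?case
        by (subst elim(1), subst elim(2)) (simp add: S_def algebra_simps)
    qed
  qed
  ultimately show ?thesis
    by (simp add: T_fixpoint_def)
qed

lemma T_fixpoint_diff:
  "T_fixpoint b1 g1 \<Longrightarrow> T_fixpoint b2 g2 \<Longrightarrow> T_fixpoint (\<lambda>t. b1 t - b2 t) (\<lambda>t. g1 t - g2 t)"
  using T_fixpoint_lincomb[of b1 g1 b2 g2 1 "-1"] by simp

lemma T_fixpoint_sum:
  fixes n :: nat
  assumes "\<And>m. m < n \<Longrightarrow> T_fixpoint (b m) (g m)"
  shows "T_fixpoint (\<lambda>t. \<Sum>m<n. c m * b m t) (\<lambda>t. \<Sum>m<n. c m * g m t)"
  using assms
proof (induction n)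
  case 0
  then show ?case
    by (simp add: T_fixpoint_def S_def in_Lp_zero)
next
  case (Suc n)
  then show ?case
    using T_fixpoint_lincomb[of _ _ "b n" "g n" 1 "c n"] by simp
qed

lemma Lp_norm_pow_T_fixpoint:
  assumes g: "T_fixpoint b g" and b: "in_Lp p I b"
  shows "Lp_norm_pow p I g = \<Lambda> powr p * Lp_norm_pow p I (\<lambda>t. g t - b t)"
proof -
  have gb: "in_Lp p I (\<lambda>t. g t - b t)"
    using g b p_pos by (intro in_Lp_diff) (auto simp: T_fixpoint_def)
  have "Lp_norm_pow p I g = Lp_norm_pow p I (S (\<lambda>t. g t - b t))"
    using g in_Lp_S[OF gb]
    by (intro Lp_norm_pow_cong_AE) (auto simp: T_fixpoint_def in_Lp_measurable)
  then show ?thesis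
    by (simp add: Lp_norm_pow_S[OF gb])
qed

lemma T_fixpoint_unique:
  assumes "T_fixpoint b g1" "T_fixpoint b g2"
  shows "AE t in M. g1 t = g2 t"
proof -
  have d: "T_fixpoint (\<lambda>_. 0) (\<lambda>t. g1 t - g2 t)"
    using T_fixpoint_diff[OF assms] by simp
  then have "Lp_norm_pow p I (\<lambda>t. g1 t - g2 t) = \<Lambda> powr p * Lp_norm_pow p I (\<lambda>t. g1 t - g2 t)"
    using Lp_norm_pow_T_fixpoint[OF d in_Lp_zero] by simp
  then have "Lp_norm_pow p I (\<lambda>t. g1 t - g2 t) = 0"
    using \<Lambda>_powr_less_1 by (metis mult_cancel_right1 mult_eq_0_iff less_irrefl)
  then have "AE t in M. g1 t - g2 t = 0"
    using d by (intro AE_zero_if_Lp_norm_pow_eq_0) (auto simp: T_fixpoint_def)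
  then show ?thesis
    by auto
qed

lemma Lp_norm_pow_le_T_fixpoint:
  assumes g: "T_fixpoint b g" and b: "in_Lp p I b"
  shows "Lp_norm_pow p I b \<le> 2 powr p * (1 + 1 / \<Lambda> powr p) * Lp_norm_pow p I g"
proof -
  have g_Lp: "in_Lp p I g"
    using g by (simp add: T_fixpoint_def)
  have gb: "in_Lp p I (\<lambda>t. g t - b t)"
    using in_Lp_diff[of p I g b] g_Lp b p_pos by simp
  have "Lp_norm_pow p I b = Lp_norm_pow p I (\<lambda>t. g t - (g t - b t))"
    by simp
  also have "\<dots> \<le> 2 powr p * (Lp_norm_pow p I g + Lp_norm_pow p I (\<lambda>t. g t - b t))"
    using g_Lp gb p_pos by (intro Lp_norm_pow_diff_le) auto
  also have "Lp_norm_pow p I (\<lambda>t. g t - b t) = Lp_norm_pow p I g / \<Lambda> powr p"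
    using Lp_norm_pow_T_fixpoint[OF g b] \<Lambda>_powr_pos by simp
  finally show ?thesis
    by (simp add: algebra_simps)
qed

lemma AE_defect_T_fixpoint: "T_fixpoint b g \<Longrightarrow> AE t in M. defect g t = 0"
  unfolding T_fixpoint_def by (intro AE_defect_eq_0_if_AE_eq_S) auto

lemma T_fixpoint_if_AE_defect:
  assumes "in_Lp p I f" "AE t in M. defect f t = 0"
  shows "T_fixpoint (\<lambda>t. f t - S_left_inv f t) f"
  using assms by (auto simp: T_fixpoint_def defect_def elim!: AE_mp intro!: AE_I2)

section \<open>The Neumann series\<close>

lemma \<phi>_funpow_measurable [measurable]: "(\<phi> ^^ j) \<in> M \<rightarrow>\<^sub>M M"
  by (induction j) (auto intro: measurable_compose[OF _ \<phi>_measurable])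

lemma nn_integral_\<phi>_funpow:
  fixes h :: "real \<Rightarrow> ennreal"
  assumes h [measurable]: "h \<in> borel_measurable M"
  shows "(\<integral>\<^sup>+t. h ((\<phi> ^^ j) t) \<partial>M) = (\<integral>\<^sup>+t. h t \<partial>M)"
proof (induction j)
  case (Suc j)
  have "(\<integral>\<^sup>+t. h ((\<phi> ^^ Suc j) t) \<partial>M) = (\<integral>\<^sup>+t. h ((\<phi> ^^ j) (\<phi> t)) \<partial>M)"
    by (simp add: funpow_Suc_right del: funpow.simps)
  also have "\<dots> = (\<integral>\<^sup>+t. h ((\<phi> ^^ j) t) \<partial>M)"
    by (rule nn_integral_\<phi>) measurable
  finally show ?case
    using Suc by simp
qed simp

lemma S_funpow_measurable:
  assumes "b \<in> borel_measurable M"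
  shows "(S ^^ j) b \<in> borel_measurable M"
proof (induction j)
  case (Suc j)
  then show ?case
    unfolding funpow.simps comp_def S_def[abs_def]
    by (intro borel_measurable_times weight_measurable measurable_compose[OF \<phi>_measurable])
qed (simp add: assms)

lemma S_funpow_Suc: "(S ^^ Suc j) b t = weight t * (S ^^ j) b (\<phi> t)"
  by (simp only: funpow.simps comp_apply S_def[of "(S ^^ j) b"])

lemma abs_S_funpow: "t \<in> I \<Longrightarrow> \<bar>(S ^^ j) b t\<bar> = \<Lambda> ^ j * \<bar>b ((\<phi> ^^ j) t)\<bar>"
proof (induction j arbitrary: t)
  case (Suc j)
  have "\<bar>(S ^^ Suc j) b t\<bar> = \<bar>weight t\<bar> * \<bar>(S ^^ j) b (\<phi> t)\<bar>"
    by (simp only: S_funpow_Suc abs_mult)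
  also have "\<dots> = \<Lambda> * (\<Lambda> ^ j * \<bar>b ((\<phi> ^^ j) (\<phi> t))\<bar>)"
    using Suc \<phi>_in_I by (simp add: abs_weight)
  also have "(\<phi> ^^ j) (\<phi> t) = (\<phi> ^^ Suc j) t"
    by (simp add: funpow_Suc_right del: funpow.simps)
  finally show ?case
    by simp
qed simp

definition neumann_sum :: "(real \<Rightarrow> real) \<Rightarrow> real \<Rightarrow> real" where
  "neumann_sum b t = - (\<Sum>j. (S ^^ Suc j) b t)"

text \<open>The majorant is integrable, hence finite almost everywhere.  Splitting
  \<open>\<Lambda>\<^sup>j = sqrt \<Lambda>\<^sup>j * sqrt \<Lambda>\<^sup>j\<close>, it bounds \<open>|S\<^sup>j b t|\<close> by \<open>sqrt \<Lambda>\<^sup>j\<close> times its \<open>p\<close>-th root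
  (\<open>abs_S_funpow_le_majorant\<close>), so the Neumann series converges almost everywhere.\<close>

definition majorant :: "(real \<Rightarrow> real) \<Rightarrow> real \<Rightarrow> ennreal" where
  "majorant b t = (\<Sum>j. ennreal (sqrt \<Lambda> ^ j * \<bar>b ((\<phi> ^^ j) t)\<bar> powr p))"

lemma sqrt_\<Lambda>: "0 < sqrt \<Lambda>" "sqrt \<Lambda> < 1"
  using \<Lambda>_pos \<Lambda>_less_1 by (auto simp: real_sqrt_lt_1_iff)

lemma majorant_measurable:
  assumes [measurable]: "b \<in> borel_measurable M"
  shows "majorant b \<in> borel_measurable M"
  unfolding majorant_def[abs_def] by measurable

lemma nn_integral_majorant:
  assumes b: "in_Lp p I b"
  shows "(\<integral>\<^sup>+t. majorant b t \<partial>M) = ennreal (Lp_norm_pow p I b / (1 - sqrt \<Lambda>))"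
proof -
  have [measurable]: "b \<in> borel_measurable M"
    using b by (rule in_Lp_measurable)
  have "(\<integral>\<^sup>+t. majorant b t \<partial>M)
      = (\<Sum>j. \<integral>\<^sup>+t. ennreal (sqrt \<Lambda> ^ j) * ennreal (\<bar>b ((\<phi> ^^ j) t)\<bar> powr p) \<partial>M)"
    unfolding majorant_def using \<Lambda>_pos
    by (subst nn_integral_suminf) (auto simp: ennreal_mult' intro!: suminf_cong nn_integral_cong)
  also have "\<dots> = (\<Sum>j. ennreal (sqrt \<Lambda> ^ j) * ennreal (Lp_norm_pow p I b))"
    using b nn_integral_\<phi>_funpow[of "\<lambda>t. ennreal (\<bar>b t\<bar> powr p)"]
    by (simp add: nn_integral_cmult nn_integral_eq_Lp_norm_pow)
  also have "\<dots> = ennreal (1 / (1 - sqrt \<Lambda>)) * ennreal (Lp_norm_pow p I b)"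
    using sqrt_\<Lambda> by (simp add: ennreal_suminf_multc suminf_ennreal2 suminf_geometric)
  also have "\<dots> = ennreal (Lp_norm_pow p I b / (1 - sqrt \<Lambda>))"
    using sqrt_\<Lambda> by (simp add: ennreal_mult'[symmetric])
  finally show ?thesis .
qed

lemma abs_S_funpow_le_majorant:
  assumes t: "t \<in> I" and fin: "majorant b t \<noteq> \<infinity>"
  shows "\<bar>(S ^^ j) b t\<bar> \<le> sqrt \<Lambda> ^ j * enn2real (majorant b t) powr (1 / p)"
proof -
  let ?a = "\<bar>b ((\<phi> ^^ j) t)\<bar>"
  have "ennreal (sqrt \<Lambda> ^ j * ?a powr p) \<le> majorant b t"
    unfolding majorant_def
    using sum_le_suminf[of "\<lambda>j. ennreal (sqrt \<Lambda> ^ j * \<bar>b ((\<phi> ^^ j) t)\<bar> powr p)" "{j}"] by simp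
  then have "enn2real (ennreal (sqrt \<Lambda> ^ j * ?a powr p)) \<le> enn2real (majorant b t)"
    using fin by (intro enn2real_mono) (auto simp: top.not_eq_extremum)
  then have "sqrt \<Lambda> ^ j * ?a powr p \<le> enn2real (majorant b t)"
    using \<Lambda>_pos by simp
  then have "sqrt \<Lambda> ^ j * ?a \<le> enn2real (majorant b t) powr (1 / p)"
    using sqrt_\<Lambda> p_ge_1 by (intro mult_le_root_if_mult_powr_le) (auto simp: power_le_one)
  moreover have "\<bar>(S ^^ j) b t\<bar> = sqrt \<Lambda> ^ j * (sqrt \<Lambda> ^ j * ?a)"
    using t \<Lambda>_pos by (simp add: abs_S_funpow power_mult_distrib[symmetric])
  ultimately show ?thesis
    using sqrt_\<Lambda> by (simp add: mult_left_mono)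
qed

lemma summable_S_funpow:
  "t \<in> I \<Longrightarrow> majorant b t \<noteq> \<infinity> \<Longrightarrow> summable (\<lambda>j. (S ^^ j) b t)"
  by (rule summable_comparison_test'[OF summable_mult2[OF summable_geometric], where N=0])
     (use sqrt_\<Lambda> abs_S_funpow_le_majorant in auto)

lemma neumann_sum_eq_S:
  assumes "summable (\<lambda>j. (S ^^ j) b (\<phi> t))"
  shows "neumann_sum b t = S (\<lambda>s. neumann_sum b s - b s) t"
proof -
  have "(\<Sum>j. (S ^^ Suc j) b t) = (\<Sum>j. weight t * (S ^^ j) b (\<phi> t))"
    by (simp only: S_funpow_Suc)
  also have "\<dots> = weight t * (\<Sum>j. (S ^^ j) b (\<phi> t))"
    by (rule suminf_mult[OF assms])
  also have "(\<Sum>j. (S ^^ j) b (\<phi> t)) = (\<Sum>j. (S ^^ Suc j) b (\<phi> t)) + b (\<phi> t)"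
    using suminf_split_head[OF assms] by simp
  finally have "neumann_sum b t = weight t * (neumann_sum b (\<phi> t) - b (\<phi> t))"
    by (simp add: neumann_sum_def algebra_simps)
  then show ?thesis
    by (simp only: S_def)
qed

lemma abs_neumann_sum_le:
  assumes t: "t \<in> I" and fin: "majorant b t \<noteq> \<infinity>"
  shows "\<bar>neumann_sum b t\<bar> \<le> enn2real (majorant b t) powr (1 / p) / (1 - sqrt \<Lambda>)"
proof -
  let ?c = "enn2real (majorant b t) powr (1 / p)"
  have "\<bar>(S ^^ Suc j) b t\<bar> \<le> sqrt \<Lambda> ^ j * ?c" for j
  proof -
    have "sqrt \<Lambda> ^ Suc j * ?c \<le> sqrt \<Lambda> ^ j * ?c"
      using sqrt_\<Lambda> by (intro mult_right_mono power_decreasing) auto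
    then show ?thesis
      using abs_S_funpow_le_majorant[OF t fin, of "Suc j"] by linarith
  qed
  then have "norm (\<Sum>j. (S ^^ Suc j) b t) \<le> (\<Sum>j. sqrt \<Lambda> ^ j * ?c)"
    by (intro norm_suminf_le summable_mult2 summable_geometric) (use sqrt_\<Lambda> in auto)
  then have "\<bar>neumann_sum b t\<bar> \<le> (\<Sum>j. sqrt \<Lambda> ^ j * ?c)"
    by (simp add: neumann_sum_def)
  also have "\<dots> = ?c / (1 - sqrt \<Lambda>)"
    using sqrt_\<Lambda> by (simp add: suminf_mult2[symmetric] suminf_geometric)
  finally show ?thesis .
qed

definition neumann_bound :: real where
  "neumann_bound = (1 / (1 - sqrt \<Lambda>)) powr p / (1 - sqrt \<Lambda>)"

lemma neumann_sum_measurable: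
  assumes "b \<in> borel_measurable M"
  shows "neumann_sum b \<in> borel_measurable M"
  unfolding neumann_sum_def[abs_def] using S_funpow_measurable[OF assms] by measurable

lemma nn_integral_neumann_sum_le:
  assumes b: "in_Lp p I b"
  shows "(\<integral>\<^sup>+t. ennreal (\<bar>neumann_sum b t\<bar> powr p) \<partial>M) \<le> ennreal (neumann_bound * Lp_norm_pow p I b)"
proof -
  have [measurable]: "majorant b \<in> borel_measurable M"
    by (rule majorant_measurable[OF in_Lp_measurable[OF b]])
  define D where "D = (1 / (1 - sqrt \<Lambda>)) powr p"
  have D: "0 < D"
    using sqrt_\<Lambda> by (simp add: D_def)
  have pointwise: "ennreal (\<bar>neumann_sum b t\<bar> powr p) \<le> ennreal D * majorant b t" if "t \<in> I" for t
  proof (cases "majorant b t = \<infinity>")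
    case False
    let ?R = "enn2real (majorant b t)"
    have "\<bar>neumann_sum b t\<bar> powr p \<le> (?R powr (1 / p) / (1 - sqrt \<Lambda>)) powr p"
      using abs_neumann_sum_le[OF that False] p_pos by (intro powr_mono2) auto
    also have "\<dots> = D * ?R"
      using sqrt_\<Lambda> p_pos by (simp add: D_def powr_divide powr_powr)
    finally have "ennreal (\<bar>neumann_sum b t\<bar> powr p) \<le> ennreal (D * ?R)"
      by (rule ennreal_leI)
    also have "\<dots> = ennreal D * majorant b t"
      using D False by (simp add: ennreal_mult less_top)
    finally show ?thesis .
  qed (use D in \<open>simp add: ennreal_mult_top\<close>)
  have "(\<integral>\<^sup>+t. ennreal (\<bar>neumann_sum b t\<bar> powr p) \<partial>M) \<le> (\<integral>\<^sup>+t. ennreal D * majorant b t \<partial>M)"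
    using pointwise by (intro nn_integral_mono) simp
  also have "\<dots> = ennreal (D * (Lp_norm_pow p I b / (1 - sqrt \<Lambda>)))"
    using D by (simp add: nn_integral_cmult nn_integral_majorant[OF b] ennreal_mult' del: times_divide_eq_right)
  finally show ?thesis
    by (simp add: D_def neumann_bound_def)
qed

lemma
  assumes b: "in_Lp p I b"
  shows in_Lp_neumann_sum: "in_Lp p I (neumann_sum b)"
    and Lp_norm_pow_neumann_sum_le: "Lp_norm_pow p I (neumann_sum b) \<le> neumann_bound * Lp_norm_pow p I b"
proof -
  have "0 \<le> neumann_bound * Lp_norm_pow p I b"
    using sqrt_\<Lambda> by (simp add: neumann_bound_def Lp_norm_pow_nonneg)
  then show "in_Lp p I (neumann_sum b)" "Lp_norm_pow p I (neumann_sum b) \<le> neumann_bound * Lp_norm_pow p I b"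
    using neumann_sum_measurable[OF in_Lp_measurable[OF b]] nn_integral_neumann_sum_le[OF b]
    by (simp_all add: in_Lp_if_nn_integral_le Lp_norm_pow_le_if_nn_integral_le)
qed

lemma T_fixpoint_neumann_sum:
  assumes b: "in_Lp p I b"
  shows "T_fixpoint b (neumann_sum b)"
proof -
  have "AE t in M. majorant b t \<noteq> \<infinity>"
    by (rule nn_integral_noteq_infinite)
       (simp_all add: nn_integral_majorant[OF b] majorant_measurable[OF in_Lp_measurable[OF b]])
  then have "AE t in M. majorant b (\<phi> t) \<noteq> \<infinity>"
    by (rule AE_\<phi>)
  then have "AE t in M. neumann_sum b t = S (\<lambda>s. neumann_sum b s - b s) t"
    by (rule AE_mp) (auto intro!: AE_I2 neumann_sum_eq_S summable_S_funpow \<phi>_in_I)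
  then show ?thesis
    using in_Lp_neumann_sum[OF b] by (simp add: T_fixpoint_def)
qed

lemma Lp_norm_pow_T_fixpoint_le:
  assumes g: "T_fixpoint b g" and b: "in_Lp p I b"
  shows "Lp_norm_pow p I g \<le> neumann_bound * Lp_norm_pow p I b"
proof -
  have "Lp_norm_pow p I g = Lp_norm_pow p I (neumann_sum b)"
    using T_fixpoint_unique[OF g T_fixpoint_neumann_sum[OF b]] g T_fixpoint_neumann_sum[OF b]
    by (intro Lp_norm_pow_cong_AE) (auto simp: T_fixpoint_def in_Lp_measurable)
  then show ?thesis
    using Lp_norm_pow_neumann_sum_le[OF b] by simp
qed

lemma T_fixpoint_fractal_fn:
  assumes "in_Lp p I b"
  shows "T_fixpoint b (fractal_fn p x N \<alpha> (\<lambda>_. 0) b)"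
  using someI[where P="\<lambda>g. in_Lp p I g \<and> (AE t in M. fractal_T x N \<alpha> (\<lambda>_. 0) b g t = g t)"]
    T_fixpoint_neumann_sum[OF assms]
  by (simp add: fractal_fn_def T_fixpoint_iff_fractal_T)

section \<open>Transfer of the Schauder basis\<close>

lemma Lp_tendsto_T_fixpoint_sums:
  assumes Y: "\<And>m. T_fixpoint (b m) (Y m)" and b: "\<And>m. in_Lp p I (b m)"
    and f: "T_fixpoint h f" and h: "in_Lp p I h"
    and lim: "Lp_tendsto p I (\<lambda>n t. \<Sum>m<n. c m * b m t) h"
  shows "Lp_tendsto p I (\<lambda>n t. \<Sum>m<n. c m * Y m t) f"
proof -
  have bound: "Lp_norm_pow p I (\<lambda>t. (\<Sum>m<n. c m * Y m t) - f t)
      \<le> neumann_bound * Lp_norm_pow p I (\<lambda>t. (\<Sum>m<n. c m * b m t) - h t)" for n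
  proof -
    have "T_fixpoint (\<lambda>t. (\<Sum>m<n. c m * b m t) - h t) (\<lambda>t. (\<Sum>m<n. c m * Y m t) - f t)"
      using T_fixpoint_sum[where b=b and g=Y and n=n and c=c] Y f by (intro T_fixpoint_diff) auto
    moreover have "in_Lp p I (\<lambda>t. (\<Sum>m<n. c m * b m t) - h t)"
      using in_Lp_sum[where y=b and n=n and c=c] b h p_pos by (intro in_Lp_diff) auto
    ultimately show ?thesis
      by (rule Lp_norm_pow_T_fixpoint_le)
  qed
  have "(\<lambda>n. Lp_norm_pow p I (\<lambda>t. (\<Sum>m<n. c m * b m t) - h t)) \<longlonglongrightarrow> 0"
    using lim by (simp only: Lp_tendsto_iff_Lp_norm_pow[OF p_pos])
  then have "(\<lambda>n. Lp_norm_pow p I (\<lambda>t. (\<Sum>m<n. c m * Y m t) - f t)) \<longlonglongrightarrow> 0"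
    by (rule tendsto_0_le[where K=neumann_bound], intro always_eventually allI)
       (simp add: abs_of_nonneg[OF Lp_norm_pow_nonneg] bound mult.commute)
  then show ?thesis
    by (simp only: Lp_tendsto_iff_Lp_norm_pow[OF p_pos])
qed

lemma AE_defect_Lp_closed_span:
  assumes Y: "\<And>m. T_fixpoint (b m) (Y m)" and f: "f \<in> Lp_closed_span p I Y"
  shows "AE t in M. defect f t = 0"
proof -
  define C where "C = 2 powr p * (1 + (x N - x 0) / (x 1 - x 0))"
  have C: "0 < C"
    using x_less[of 0 1] x_less[of 0 N] N_ge_2 by (simp add: C_def add_pos_nonneg)
  have f_Lp: "in_Lp p I f"
    using f by (simp add: Lp_closed_span_def)
  have "Lp_norm_pow p I (defect f) \<le> 0 + e" if "0 < e" for e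
  proof -
    have "0 < e / C"
      using \<open>0 < e\<close> C by simp
    then obtain k c where approx: "Lp_norm_pow p I (\<lambda>t. f t - (\<Sum>m<k. c m * Y m t)) < e / C"
      by (rule Lp_closed_span_approx[OF p_pos f])
    let ?u = "\<lambda>t. f t - (\<Sum>m<k. c m * Y m t)"
    have u_Lp: "in_Lp p I ?u"
      using f_Lp Y p_pos by (intro in_Lp_diff in_Lp_sum) (auto simp: T_fixpoint_def)
    have "AE t in M. defect (\<lambda>t. \<Sum>m<k. c m * Y m t) t = 0"
      by (rule AE_defect_T_fixpoint[OF T_fixpoint_sum]) (rule Y)
    then have "AE t in M. defect f t = defect ?u t"
      by eventually_elim (simp add: defect_diff)
    then have "Lp_norm_pow p I (defect f) = Lp_norm_pow p I (defect ?u)"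
      using in_Lp_defect[OF f_Lp] in_Lp_defect[OF u_Lp]
      by (intro Lp_norm_pow_cong_AE) (auto simp: in_Lp_measurable)
    also have "\<dots> \<le> C * Lp_norm_pow p I ?u"
      unfolding C_def by (rule Lp_norm_pow_defect_le[OF u_Lp])
    also have "\<dots> \<le> e"
      using approx C by (simp add: field_simps)
    finally show ?thesis
      by simp
  qed
  then have "Lp_norm_pow p I (defect f) \<le> 0"
    by (rule field_le_epsilon)
  then have "Lp_norm_pow p I (defect f) = 0"
    using Lp_norm_pow_nonneg[of p I "defect f"] by (rule antisym)
  then show ?thesis
    by (rule AE_zero_if_Lp_norm_pow_eq_0[OF in_Lp_defect[OF f_Lp]])
qed

lemma Lp_tendsto_basis_sum_diff:
  assumes Y: "\<And>m. T_fixpoint (b m) (Y m)" and b: "\<And>m. in_Lp p I (b m)" and f: "in_Lp p I f"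
    and c: "Lp_tendsto p I (\<lambda>n t. \<Sum>m<n. c m * Y m t) f"
    and d: "Lp_tendsto p I (\<lambda>n t. \<Sum>m<n. d m * Y m t) f"
  shows "Lp_tendsto p I (\<lambda>n t. \<Sum>m<n. (c m - d m) * b m t) (\<lambda>_. 0)"
proof -
  define C where "C = 2 powr p * (1 + 1 / \<Lambda> powr p)"
  let ?Yc = "\<lambda>n t. (\<Sum>m<n. c m * Y m t) - f t" and ?Yd = "\<lambda>n t. (\<Sum>m<n. d m * Y m t) - f t"
  have Y_Lp: "in_Lp p I (Y m)" for m
    using Y by (simp add: T_fixpoint_def)
  have b_bound: "Lp_norm_pow p I (\<lambda>t. \<Sum>m<n. (c m - d m) * b m t)
      \<le> C * Lp_norm_pow p I (\<lambda>t. \<Sum>m<n. (c m - d m) * Y m t)" for n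
    unfolding C_def using Y b p_pos
    by (intro Lp_norm_pow_le_T_fixpoint T_fixpoint_sum in_Lp_sum) auto
  have Y_bound: "Lp_norm_pow p I (\<lambda>t. \<Sum>m<n. (c m - d m) * Y m t)
      \<le> 2 powr p * (Lp_norm_pow p I (?Yc n) + Lp_norm_pow p I (?Yd n))" for n
  proof -
    have "(\<lambda>t. \<Sum>m<n. (c m - d m) * Y m t) = (\<lambda>t. ?Yc n t - ?Yd n t)"
      by (simp add: sum_subtractf left_diff_distrib)
    moreover have "in_Lp p I (?Yc n)" "in_Lp p I (?Yd n)"
      using in_Lp_sum[where y=Y and n=n and c=c] in_Lp_sum[where y=Y and n=n and c=d] Y_Lp f p_pos
      by (auto intro: in_Lp_diff)
    ultimately show ?thesis
      using p_pos by (simp only: Lp_norm_pow_diff_le)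
  qed
  have bound: "norm (Lp_norm_pow p I (\<lambda>t. \<Sum>m<n. (c m - d m) * b m t))
      \<le> norm (Lp_norm_pow p I (?Yc n) + Lp_norm_pow p I (?Yd n)) * (C * 2 powr p)" for n
  proof -
    have "Lp_norm_pow p I (\<lambda>t. \<Sum>m<n. (c m - d m) * b m t)
        \<le> C * (2 powr p * (Lp_norm_pow p I (?Yc n) + Lp_norm_pow p I (?Yd n)))"
      using order_trans[OF b_bound[of n] mult_left_mono[OF Y_bound[of n]]] by (simp add: C_def)
    then show ?thesis
      by (simp add: abs_of_nonneg Lp_norm_pow_nonneg mult_ac)
  qed
  have "(\<lambda>n. Lp_norm_pow p I (?Yc n)) \<longlonglongrightarrow> 0" "(\<lambda>n. Lp_norm_pow p I (?Yd n)) \<longlonglongrightarrow> 0"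
    using c d by (simp_all only: Lp_tendsto_iff_Lp_norm_pow[OF p_pos])
  then have "(\<lambda>n. Lp_norm_pow p I (?Yc n) + Lp_norm_pow p I (?Yd n)) \<longlonglongrightarrow> 0"
    by (rule tendsto_add_zero)
  then have "(\<lambda>n. Lp_norm_pow p I (\<lambda>t. \<Sum>m<n. (c m - d m) * b m t)) \<longlonglongrightarrow> 0"
    by (rule tendsto_0_le[OF _ always_eventually]) (use bound in blast)
  then show ?thesis
    by (simp add: Lp_tendsto_iff_Lp_norm_pow[OF p_pos])
qed

lemma T_fixpoint_expansion_exists:
  assumes basis: "Lp_schauder_basis p I b" and Y: "\<And>m. T_fixpoint (b m) (Y m)"
    and f: "f \<in> Lp_closed_span p I Y"
  shows "\<exists>c. Lp_tendsto p I (\<lambda>n t. \<Sum>m<n. c m * Y m t) f"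
proof -
  have b: "in_Lp p I (b m)" for m
    using basis by (simp add: Lp_schauder_basis_def Lp_schauder_basis_of_def)
  have f_Lp: "in_Lp p I f"
    using f by (simp add: Lp_closed_span_def)
  let ?h = "\<lambda>t. f t - S_left_inv f t"
  have h: "T_fixpoint ?h f"
    using f_Lp AE_defect_Lp_closed_span[OF Y f] by (rule T_fixpoint_if_AE_defect)
  have h_Lp: "in_Lp p I ?h"
    using p_pos f_Lp in_Lp_S_left_inv[OF f_Lp] by (intro in_Lp_diff) auto
  obtain c where "Lp_tendsto p I (\<lambda>n t. \<Sum>m<n. c m * b m t) ?h"
    using basis h_Lp by (auto simp: Lp_schauder_basis_def Lp_schauder_basis_of_def)
  then show ?thesis
    by (intro exI Lp_tendsto_T_fixpoint_sums[OF Y b h h_Lp])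
qed

lemma T_fixpoint_expansion_unique:
  assumes basis: "Lp_schauder_basis p I b" and Y: "\<And>m. T_fixpoint (b m) (Y m)" and f: "in_Lp p I f"
    and c: "Lp_tendsto p I (\<lambda>n t. \<Sum>m<n. c m * Y m t) f"
    and d: "Lp_tendsto p I (\<lambda>n t. \<Sum>m<n. d m * Y m t) f"
  shows "c = d"
proof -
  have b: "in_Lp p I (b m)" for m
    using basis by (simp add: Lp_schauder_basis_def Lp_schauder_basis_of_def)
  have "\<exists>!e. Lp_tendsto p I (\<lambda>n t. \<Sum>m<n. e m * b m t) (\<lambda>_. 0)"
    using basis in_Lp_zero by (simp add: Lp_schauder_basis_def Lp_schauder_basis_of_def)
  then obtain c0 where unique: "\<And>c'. Lp_tendsto p I (\<lambda>n t. \<Sum>m<n. c' m * b m t) (\<lambda>_. 0) \<Longrightarrow> c' = c0"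
    by blast
  have "(\<lambda>m. c m - d m) = c0"
    by (rule unique, rule Lp_tendsto_basis_sum_diff[OF Y b f c d])
  moreover have "(\<lambda>_. 0) = c0"
    by (rule unique) (simp add: Lp_tendsto_def Lp_norm_def)
  ultimately show "c = d"
    by (simp add: fun_eq_iff)
qed

end

theorem proposition6p4:
  fixes p \<Lambda> :: real and N :: nat and x :: "nat \<Rightarrow> real"
    and \<alpha> :: "nat \<Rightarrow> real \<Rightarrow> real" and b :: "nat \<Rightarrow> real \<Rightarrow> real"
  assumes "1 \<le> p"
    and "N \<ge> 2"
    and "\<And>i. i < N \<Longrightarrow> x i < x (Suc i)"
    and "\<And>n. 1 \<le> n \<Longrightarrow> n \<le> N \<Longrightarrow> \<alpha> n \<in> borel_measurable (lebesgue_on (Ival x N))"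
    and "\<And>n t. 1 \<le> n \<Longrightarrow> n \<le> N \<Longrightarrow> t \<in> Ival x N \<Longrightarrow> \<alpha> n t \<in> {\<Lambda>, - \<Lambda>}"
    and "0 < \<Lambda>" and "\<Lambda> < 1"
    and "Lp_schauder_basis p (Ival x N) b"
  shows "Lp_schauder_sequence p (Ival x N) (\<lambda>m. fractal_fn p x N \<alpha> (\<lambda>_. 0) (b m))"
proof -
  interpret fractal_partition p \<Lambda> N x \<alpha>
    using assms(1-7) by unfold_locales auto
  define Y where "Y = (\<lambda>m. fractal_fn p x N \<alpha> (\<lambda>_. 0) (b m))"
  have Y: "T_fixpoint (b m) (Y m)" for m
    using assms(8) unfolding Y_def
    by (intro T_fixpoint_fractal_fn) (simp add: Lp_schauder_basis_def Lp_schauder_basis_of_def)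
  show ?thesis
    unfolding Lp_schauder_sequence_def Lp_schauder_basis_of_def Y_def[symmetric]
  proof (intro conjI allI ballI ex_ex1I)
    show "Y m \<in> Lp_closed_span p I Y" for m
      using Y by (intro generator_in_Lp_closed_span) (simp add: T_fixpoint_def)
    fix f assume f: "f \<in> Lp_closed_span p I Y"
    then show "\<exists>c. Lp_tendsto p I (\<lambda>n t. \<Sum>m<n. c m * Y m t) f"
      by (rule T_fixpoint_expansion_exists[OF assms(8) Y])
    show "c = d" if "Lp_tendsto p I (\<lambda>n t. \<Sum>m<n. c m * Y m t) f"
      and "Lp_tendsto p I (\<lambda>n t. \<Sum>m<n. d m * Y m t) f" for c d
      using f that by (intro T_fixpoint_expansion_unique[OF assms(8) Y]) (simp_all add: Lp_closed_span_def)
  qed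
qed

end
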